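(* The topological space $(\mathbb{X},\tau_{\mathbb{X}})$, where $\mathbb{X}=\max(\mathbb{D})$ and $\tau_{\mathbb{X}}=\{U\cap\mathbb{X} : U\text{ Scott-open in }\mathbb{D}\}$, is zero-dimensional and Hausdorff.
   Context: Fix a finite set $\mathrm{Act}$. For a dcpo $D$, $K(D)$ denotes its compact elements; a bifinite (SFP) domain is an algebraic dcpo in which for every finite $F\subseteq K(D)$ the set obtained from $F$ by repeatedly taking sets of minimal upper bounds is finite and contained in $K(D)$, and every upper bound of $F$ is above a minimal upper bound of $F$. The Scott topology consists of the sets $U$ with $U={\uparrow}(U\cap K(D))$; the Lawson topology is generated by the sets ${\uparrow}k\setminus{\uparrow}l$, $k,l\in K(D)$. The mixed powerdomain $\mathcal{M}(D)$ consists of pairs $(L,U)$ with $L$ Scott-closed, $U$ a Lawson-closed upper set, $L={\downarrow}(L\cap U)$, ordered by $(L,U)\le(L',U')$ iff $L\subseteq L'$ and $U'\subseteq U$. $\mathbb{D}$ is the initial solution over bifinite domains of $\mathbb{D}\cong\prod_{\alpha\in\mathrm{Act}}\mathcal{M}(\mathbb{D})$; $\max(\mathbb{D})$ is its set of maximal elements. A space is zero-dimensional if every open set is a union of clopen sets. *)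

theory Defs
  imports "HOL-Analysis.Analysis" "HOL-Library.FuncSet"
begin

definition up_cl :: "'a::order set \<Rightarrow> 'a set" where
  "up_cl S = {y. \<exists>x\<in>S. x \<le> y}"

definition down_cl :: "'a::order set \<Rightarrow> 'a set" where
  "down_cl S = {y. \<exists>x\<in>S. y \<le> x}"

definition directed :: "'a::order set \<Rightarrow> bool" where
  "directed S \<longleftrightarrow> S \<noteq> {} \<and> (\<forall>x\<in>S. \<forall>y\<in>S. \<exists>z\<in>S. x \<le> z \<and> y \<le> z)"

definition is_lub :: "'a::order set \<Rightarrow> 'a \<Rightarrow> bool" where
  "is_lub S x \<longleftrightarrow> (\<forall>y\<in>S. y \<le> x) \<and> (\<forall>z. (\<forall>y\<in>S. y \<le> z) \<longrightarrow> x \<le> z)"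

definition dcpo :: "'a::order itself \<Rightarrow> bool" where
  "dcpo _ \<longleftrightarrow> (\<forall>S::'a set. directed S \<longrightarrow> (\<exists>x. is_lub S x))"

definition compact_el :: "'a::order \<Rightarrow> bool" where
  "compact_el k \<longleftrightarrow>
     (\<forall>S s. directed S \<longrightarrow> is_lub S s \<longrightarrow> k \<le> s \<longrightarrow> (\<exists>x\<in>S. k \<le> x))"

definition compacts :: "'a::order set" where
  "compacts = {k. compact_el k}"

definition algebraic :: "'a::order itself \<Rightarrow> bool" where
  "algebraic T \<longleftrightarrow> dcpo T \<and>
     (\<forall>x::'a. directed {k\<in>compacts. k \<le> x} \<and> is_lub {k\<in>compacts. k \<le> x} x)"

definition ubs :: "'a::order set \<Rightarrow> 'a set" where
  "ubs F = {u. \<forall>x\<in>F. x \<le> u}"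

definition mubs :: "'a::order set \<Rightarrow> 'a set" where
  "mubs F = {u\<in>ubs F. \<forall>v\<in>ubs F. v \<le> u \<longrightarrow> v = u}"

inductive_set mub_closure :: "'a::order set \<Rightarrow> 'a set" for F where
  base: "x \<in> F \<Longrightarrow> x \<in> mub_closure F"
| step: "finite G \<Longrightarrow> G \<in> Pow (mub_closure F) \<Longrightarrow> u \<in> mubs G \<Longrightarrow> u \<in> mub_closure F"
monos Pow_mono

definition bifinite :: "'a::order itself \<Rightarrow> bool" where
  "bifinite T \<longleftrightarrow> algebraic T \<and>
     (\<forall>F::'a set. finite F \<and> F \<subseteq> compacts \<longrightarrow>
        finite (mub_closure F) \<and> mub_closure F \<subseteq> compacts \<and>
        (\<forall>u\<in>ubs F. \<exists>m\<in>mubs F. m \<le> u))"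

definition scott_open :: "'a::order set \<Rightarrow> bool" where
  "scott_open U \<longleftrightarrow> U = up_cl (U \<inter> compacts)"

definition scott_closed :: "'a::order set \<Rightarrow> bool" where
  "scott_closed L \<longleftrightarrow> scott_open (- L)"

definition scott_topology :: "'a::order topology" where
  "scott_topology = topology_generated_by {U. scott_open U}"

definition lawson_topology :: "'a::order topology" where
  "lawson_topology = topology_generated_by
     {up_cl {k} - up_cl {l} | k l. k \<in> compacts \<and> l \<in> compacts}"

definition scott_closure :: "'a::order set \<Rightarrow> 'a set" where
  "scott_closure S = \<Inter>{C. scott_closed C \<and> S \<subseteq> C}"

definition scott_continuous :: "('a::order \<Rightarrow> 'a) \<Rightarrow> bool" where
  "scott_continuous f \<longleftrightarrow> mono f \<and>
     (\<forall>S s. directed S \<longrightarrow> is_lub S s \<longrightarrow> is_lub (f ` S) (f s))"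

definition mixed_pd :: "('a::order set \<times> 'a set) set" where
  "mixed_pd = {(L, U). scott_closed L \<and> closedin lawson_topology U \<and> up_cl U = U
                       \<and> L = down_cl (L \<inter> U)}"

definition mixed_le :: "('a::order set \<times> 'a set) \<Rightarrow> ('a set \<times> 'a set) \<Rightarrow> bool" where
  "mixed_le p q \<longleftrightarrow> fst p \<subseteq> fst q \<and> snd q \<subseteq> snd p"

definition mixed_map :: "('a::order \<Rightarrow> 'a) \<Rightarrow> ('a set \<times> 'a set) \<Rightarrow> ('a set \<times> 'a set)" where
  "mixed_map f p = (scott_closure (f ` fst p), up_cl (f ` snd p))"

definition is_solution :: "'act set \<Rightarrow> ('a::order \<Rightarrow> 'act \<Rightarrow> 'a set \<times> 'a set) \<Rightarrow> bool" where
  "is_solution Act \<iota> \<longleftrightarrow>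
     bij_betw \<iota> UNIV (Pi\<^sub>E Act (\<lambda>_. mixed_pd)) \<and>
     (\<forall>x y. x \<le> y \<longleftrightarrow> (\<forall>\<alpha>\<in>Act. mixed_le (\<iota> x \<alpha>) (\<iota> y \<alpha>)))"

definition Phi :: "'act set \<Rightarrow> ('a::order \<Rightarrow> 'act \<Rightarrow> 'a set \<times> 'a set)
                    \<Rightarrow> ('a \<Rightarrow> 'a) \<Rightarrow> ('a \<Rightarrow> 'a)" where
  "Phi Act \<iota> f = (\<lambda>x. inv \<iota> (restrict (\<lambda>\<alpha>. mixed_map f (\<iota> x \<alpha>)) Act))"

text \<open>Minimal invariance (Pitts): the identity is the least fixed point of
  f |-> iota^-1 o Prod_Act M(f) o iota on Scott-continuous maps; this characterizes
  the initial (canonical bilimit) solution up to isomorphism.\<close>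
definition minimal_invariant :: "'act set \<Rightarrow> ('a::order \<Rightarrow> 'act \<Rightarrow> 'a set \<times> 'a set) \<Rightarrow> bool" where
  "minimal_invariant Act \<iota> \<longleftrightarrow>
     (\<forall>f. scott_continuous f \<and> Phi Act \<iota> f = f \<longrightarrow> (\<forall>x. x \<le> f x))"

definition initial_solution :: "'act set \<Rightarrow> ('a::order \<Rightarrow> 'act \<Rightarrow> 'a set \<times> 'a set) \<Rightarrow> bool" where
  "initial_solution Act \<iota> \<longleftrightarrow> bifinite TYPE('a) \<and> is_solution Act \<iota> \<and> minimal_invariant Act \<iota>"

definition maximal_elements :: "'a::order set" where
  "maximal_elements = {x. \<forall>y. x \<le> y \<longrightarrow> y = x}"

end

theory Submission
  imports Defs
begin

text \<open>The key fact is that a maximal point \<open>x\<close>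
  not above a compact element \<open>k\<close> lies above a compact \<open>l\<close> that has no common upper bound
  with \<open>k\<close>; it is obtained from Rudin's lemma. Consequently, on the maximal points the
  basic Scott-open sets \<open>\<up>k\<close> are also closed, which gives a clopen neighbourhood base, and two
  distinct maximal points are separated by such inconsistent \<open>\<up>k\<close> and \<open>\<up>l\<close>.\<close>

lemma in_up_cl_singleton [simp]: "y \<in> up_cl {x} \<longleftrightarrow> x \<le> y"
  by (simp add: up_cl_def)

lemma mubs_subset_ubs: "mubs F \<subseteq> ubs F"
  by (auto simp: mubs_def)

lemma ubs_pair_antimono: "l \<le> l' \<Longrightarrow> ubs {k, l'} \<subseteq> ubs {k, l}"
  by (auto simp: ubs_def intro: order_trans)

lemma chain_subset_Inter_meets_finite:
  assumes "C \<noteq> {}" "chain\<^sub>\<subseteq> C" "finite S" "\<forall>A\<in>C. A \<inter> S \<noteq> {}"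
  shows "\<Inter>C \<inter> S \<noteq> {}"
proof
  assume "\<Inter>C \<inter> S = {}"
  then have "S \<subseteq> \<Union>(uminus ` C)" by auto
  moreover have "subset.chain UNIV (uminus ` C)"
    using assms(2) by (auto simp: chain_subset_alt_def subset_chain_def)
  ultimately obtain B where "B \<in> uminus ` C" "S \<subseteq> B"
    using finite_subset_Union_chain[OF assms(3)] assms(1) by blast
  then show False using assms(4) by auto
qed

text \<open>The invariant of the Zorn-style proof of Rudin's lemma: its minimal instances are directed.\<close>
definition rudin_admissible :: "'a::order set set \<Rightarrow> 'a set \<Rightarrow> bool" where
  "rudin_admissible FF A \<longleftrightarrow> (\<forall>F\<in>FF. A \<inter> F \<noteq> {}) \<and>
     (\<forall>F\<in>FF. \<forall>G\<in>FF. G \<subseteq> up_cl F \<longrightarrow> A \<inter> G \<subseteq> up_cl (A \<inter> F))"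

lemma rudin_admissible_UNIV: "\<forall>F\<in>FF. F \<noteq> {} \<Longrightarrow> rudin_admissible FF UNIV"
  by (auto simp: rudin_admissible_def)

lemma rudin_admissible_Inter_chain:
  assumes fin: "\<forall>F\<in>FF. finite F" and C: "C \<noteq> {}" "chain\<^sub>\<subseteq> C" "\<forall>A\<in>C. rudin_admissible FF A"
  shows "rudin_admissible FF (\<Inter>C)"
  unfolding rudin_admissible_def
proof (intro conjI ballI impI subsetI)
  fix F assume "F \<in> FF"
  then have "\<forall>A\<in>C. A \<inter> F \<noteq> {}" using C(3) by (simp add: rudin_admissible_def)
  then show "\<Inter>C \<inter> F \<noteq> {}"
    using fin \<open>F \<in> FF\<close> by (intro chain_subset_Inter_meets_finite[OF C(1,2)]) simp_all
next
  fix F G z assume FG: "F \<in> FF" "G \<in> FF" "G \<subseteq> up_cl F" and z: "z \<in> \<Inter>C \<inter> G"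
  define W where "W = {w\<in>F. w \<le> z}"
  have "A \<inter> W \<noteq> {}" if "A \<in> C" for A
  proof -
    have "A \<inter> G \<subseteq> up_cl (A \<inter> F)"
      using C(3) that FG by (simp add: rudin_admissible_def)
    moreover have "z \<in> A \<inter> G" using z that by blast
    ultimately obtain w where "w \<in> A \<inter> F" "w \<le> z" unfolding up_cl_def by blast
    then show ?thesis unfolding W_def by blast
  qed
  moreover have "finite W" using fin FG by (simp add: W_def)
  ultimately have "\<Inter>C \<inter> W \<noteq> {}" by (intro chain_subset_Inter_meets_finite[OF C(1,2)]) simp_all
  then show "z \<in> up_cl (\<Inter>C \<inter> F)" unfolding up_cl_def W_def by blast
qed

lemma rudin_admissible_minimal_exists:
  assumes "\<forall>F\<in>FF. finite F \<and> F \<noteq> {}"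
  obtains A0 where "rudin_admissible FF A0" "\<And>A. rudin_admissible FF A \<Longrightarrow> A \<subseteq> A0 \<Longrightarrow> A = A0"
proof -
  let ?AA = "uminus ` Collect (rudin_admissible FF)"
  have "\<exists>M\<in>?AA. \<forall>X\<in>?AA. M \<subseteq> X \<longrightarrow> X = M"
  proof (rule subset_Zorn_nonempty)
    show "?AA \<noteq> {}" using assms rudin_admissible_UNIV by blast
  next
    fix C assume "C \<noteq> {}" and chain: "subset.chain ?AA C"
    then have "chain\<^sub>\<subseteq> (uminus ` C)" "\<forall>A\<in>uminus ` C. rudin_admissible FF A"
      unfolding subset_chain_def chain_subset_def by auto
    then have "rudin_admissible FF (\<Inter>(uminus ` C))"
      using assms \<open>C \<noteq> {}\<close> by (intro rudin_admissible_Inter_chain) simp_all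
    moreover have "\<Union>C = - \<Inter>(uminus ` C)" by auto
    ultimately show "\<Union>C \<in> ?AA" by (metis image_eqI mem_Collect_eq)
  qed
  then obtain A0 where A0: "rudin_admissible FF A0" and max: "\<forall>X\<in>?AA. - A0 \<subseteq> X \<longrightarrow> X = - A0"
    by blast
  show thesis
  proof (rule that[OF A0])
    fix A assume "rudin_admissible FF A" "A \<subseteq> A0"
    then have "- A = - A0" using max by blast
    then show "A = A0" by simp
  qed
qed

lemma rudin_admissible_minimal_below:
  assumes A0: "rudin_admissible FF A0" and min: "\<And>A. rudin_admissible FF A \<Longrightarrow> A \<subseteq> A0 \<Longrightarrow> A = A0"
    and "x \<in> A0"
  shows "\<exists>F\<in>FF. A0 \<inter> F \<subseteq> up_cl {x}"
proof (rule ccontr)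
  assume none: "\<not> ?thesis"
  have "rudin_admissible FF (A0 - up_cl {x})"
    unfolding rudin_admissible_def
  proof (intro conjI ballI impI subsetI)
    fix F assume "F \<in> FF" then show "(A0 - up_cl {x}) \<inter> F \<noteq> {}" using none by blast
  next
    fix F G z assume "F \<in> FF" "G \<in> FF" "G \<subseteq> up_cl F" and z: "z \<in> (A0 - up_cl {x}) \<inter> G"
    then obtain w where "w \<in> A0 \<inter> F" "w \<le> z"
      using A0 unfolding rudin_admissible_def up_cl_def by blast
    moreover from this z have "\<not> x \<le> w" by (auto intro: order_trans)
    ultimately show "z \<in> up_cl ((A0 - up_cl {x}) \<inter> F)" by (auto simp: up_cl_def)
  qed
  then have "A0 - up_cl {x} = A0" using min by blast
  then show False using \<open>x \<in> A0\<close> by (metis Diff_iff in_up_cl_singleton order_refl)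
qed

lemma rudin_lemma:
  fixes FF :: "'a::order set set"
  assumes fin: "\<forall>F\<in>FF. finite F \<and> F \<noteq> {}" and "FF \<noteq> {}"
    and filtered: "\<forall>F1\<in>FF. \<forall>F2\<in>FF. \<exists>F3\<in>FF. F3 \<subseteq> up_cl F1 \<and> F3 \<subseteq> up_cl F2"
  obtains D where "directed D" "\<forall>F\<in>FF. D \<inter> F \<noteq> {}"
proof -
  obtain A0 where A0: "rudin_admissible FF A0"
    and min: "\<And>A. rudin_admissible FF A \<Longrightarrow> A \<subseteq> A0 \<Longrightarrow> A = A0"
    using rudin_admissible_minimal_exists[OF fin] by blast
  have meets: "\<forall>F\<in>FF. A0 \<inter> F \<noteq> {}" using A0 by (simp add: rudin_admissible_def)
  have below: "\<exists>F\<in>FF. A0 \<inter> F \<subseteq> up_cl {v}" if "v \<in> A0" for v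
    using rudin_admissible_minimal_below[OF A0 _ that] min by blast
  have "\<exists>z\<in>A0. x \<le> z \<and> y \<le> z" if "x \<in> A0" "y \<in> A0" for x y
  proof -
    obtain F where F: "F \<in> FF" "A0 \<inter> F \<subseteq> up_cl {x}" using below \<open>x \<in> A0\<close> by blast
    obtain G where G: "G \<in> FF" "A0 \<inter> G \<subseteq> up_cl {y}" using below \<open>y \<in> A0\<close> by blast
    obtain H where H: "H \<in> FF" "H \<subseteq> up_cl F" "H \<subseteq> up_cl G" using filtered F G by blast
    obtain z where z: "z \<in> A0 \<inter> H" using meets H by blast
    have "z \<in> up_cl (A0 \<inter> F)" "z \<in> up_cl (A0 \<inter> G)"
      using A0 F G H z unfolding rudin_admissible_def by blast+
    with F G have "x \<le> z" "y \<le> z" by (auto simp: up_cl_def intro: order_trans)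
    with z show ?thesis by blast
  qed
  moreover have "A0 \<noteq> {}" using meets \<open>FF \<noteq> {}\<close> by blast
  ultimately have "directed A0" unfolding directed_def by blast
  then show thesis using meets by (rule that)
qed

lemma bifinite_imp_algebraic: "bifinite T \<Longrightarrow> algebraic T"
  by (simp add: bifinite_def)

lemma algebraic_directed_has_lub:
  fixes S :: "'a::order set"
  shows "algebraic TYPE('a) \<Longrightarrow> directed S \<Longrightarrow> \<exists>s. is_lub S s"
  by (simp add: algebraic_def dcpo_def)

lemma algebraic_directed_compacts_below:
  fixes x :: "'a::order"
  shows "algebraic TYPE('a) \<Longrightarrow> directed {k\<in>compacts. k \<le> x}"
  by (simp add: algebraic_def)

lemma algebraic_lub_compacts_below:
  fixes x :: "'a::order"
  shows "algebraic TYPE('a) \<Longrightarrow> is_lub {k\<in>compacts. k \<le> x} x"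
  by (simp add: algebraic_def)

lemma algebraic_not_le_imp_compact:
  fixes x y :: "'a::order"
  assumes "algebraic TYPE('a)" "\<not> x \<le> y"
  obtains k where "k \<in> compacts" "k \<le> x" "\<not> k \<le> y"
  using algebraic_lub_compacts_below[OF assms(1), of x] assms(2) unfolding is_lub_def by blast

lemma bifinite_mubs_finite:
  fixes F :: "'a::order set"
  assumes "bifinite TYPE('a)" "finite F" "F \<subseteq> compacts"
  shows "finite (mubs F)"
proof -
  have "mubs F \<subseteq> mub_closure F"
    using assms(2) by (auto intro: mub_closure.step mub_closure.base)
  moreover have "finite (mub_closure F)" using assms by (simp add: bifinite_def)
  ultimately show ?thesis by (rule finite_subset)
qed

lemma bifinite_ubs_subset_up_cl_mubs:
  fixes F :: "'a::order set"
  assumes "bifinite TYPE('a)" "finite F" "F \<subseteq> compacts"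
  shows "ubs F \<subseteq> up_cl (mubs F)"
  using assms unfolding bifinite_def up_cl_def by blast

lemma maximal_elementsD: "x \<in> maximal_elements \<Longrightarrow> x \<le> y \<Longrightarrow> y = x"
  by (simp add: maximal_elements_def)

text \<open>If every compact \<open>l \<le> x\<close> were consistent with \<open>k\<close>, the sets \<open>mubs {k, l}\<close>
  would form a filtered family of finite nonempty sets; by Rudin's lemma a directed set meets
  them all, and its supremum lies above \<open>k\<close> and above \<open>x\<close>, hence equals \<open>x\<close> by maximality.\<close>
lemma bifinite_maximal_separating_compact:
  fixes x k :: "'a::order"
  assumes B: "bifinite TYPE('a)" and k: "k \<in> compacts" and x: "x \<in> maximal_elements"
    and "\<not> k \<le> x"
  shows "\<exists>l\<in>compacts. l \<le> x \<and> ubs {k, l} = {}"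
proof (rule ccontr)
  assume "\<not> ?thesis"
  then have consistent: "ubs {k, l} \<noteq> {}" if "l \<in> compacts" "l \<le> x" for l
    using that by blast
  have A: "algebraic TYPE('a)" using B by (rule bifinite_imp_algebraic)
  define C where "C = {l\<in>compacts. l \<le> x}"
  define FF where "FF = (\<lambda>l. mubs {k, l}) ` C"
  have pair: "finite {k, l}" "{k, l} \<subseteq> compacts" if "l \<in> C" for l
    using k that by (auto simp: C_def)
  have "\<forall>F\<in>FF. finite F \<and> F \<noteq> {}"
  proof
    fix F assume "F \<in> FF"
    then obtain l where l: "l \<in> C" "F = mubs {k, l}" unfolding FF_def by blast
    have "ubs {k, l} \<subseteq> up_cl F"
      using bifinite_ubs_subset_up_cl_mubs[OF B pair[OF l(1)]] l(2) by simp
    then have "F \<noteq> {}" using consistent l(1) by (auto simp: C_def up_cl_def)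
    then show "finite F \<and> F \<noteq> {}" using bifinite_mubs_finite[OF B pair[OF l(1)]] l(2) by simp
  qed
  moreover have "FF \<noteq> {}"
    using algebraic_directed_compacts_below[OF A, of x] by (simp add: FF_def C_def directed_def)
  moreover have "\<forall>F1\<in>FF. \<forall>F2\<in>FF. \<exists>F3\<in>FF. F3 \<subseteq> up_cl F1 \<and> F3 \<subseteq> up_cl F2"
  proof (intro ballI)
    fix F1 F2 assume F12: "F1 \<in> FF" "F2 \<in> FF"
    obtain l1 l2 where "l1 \<in> C" "l2 \<in> C" "F1 = mubs {k, l1}" "F2 = mubs {k, l2}"
      using F12 unfolding FF_def by blast
    moreover obtain l3 where "l3 \<in> C" "l1 \<le> l3" "l2 \<le> l3"
      using algebraic_directed_compacts_below[OF A, of x] \<open>l1 \<in> C\<close> \<open>l2 \<in> C\<close>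
      unfolding C_def directed_def by blast
    moreover have "mubs {k, l3} \<subseteq> up_cl (mubs {k, l})" if "l \<in> C" "l \<le> l3" for l
      using mubs_subset_ubs ubs_pair_antimono[OF \<open>l \<le> l3\<close>]
        bifinite_ubs_subset_up_cl_mubs[OF B pair[OF \<open>l \<in> C\<close>]] by blast
    ultimately show "\<exists>F3\<in>FF. F3 \<subseteq> up_cl F1 \<and> F3 \<subseteq> up_cl F2" unfolding FF_def by blast
  qed
  ultimately obtain D where D: "directed D" "\<forall>F\<in>FF. D \<inter> F \<noteq> {}"
    by (rule rudin_lemma)
  obtain s where s: "is_lub D s" using algebraic_directed_has_lub[OF A D(1)] ..
  have above: "k \<le> s \<and> l \<le> s" if "l \<in> C" for l
  proof -
    obtain d where d: "d \<in> D" "d \<in> mubs {k, l}" using D(2) \<open>l \<in> C\<close> unfolding FF_def by blast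
    then have "k \<le> d" "l \<le> d" by (auto simp: mubs_def ubs_def)
    moreover have "d \<le> s" using s d(1) by (simp add: is_lub_def)
    ultimately show ?thesis by (blast intro: order_trans)
  qed
  have "x \<le> s"
    using algebraic_lub_compacts_below[OF A, of x] above by (simp add: is_lub_def C_def)
  with x have "s = x" by (rule maximal_elementsD)
  moreover obtain l where "l \<in> C"
    using algebraic_directed_compacts_below[OF A, of x] by (auto simp: C_def directed_def)
  ultimately show False using above \<open>\<not> k \<le> x\<close> by blast
qed

lemma ubs_pair_empty_imp_disjoint: "ubs {k, l} = {} \<Longrightarrow> up_cl {k} \<inter> up_cl {l} = {}"
  by (auto simp: ubs_def)

lemma scott_open_up_cl_compact: "k \<in> compacts \<Longrightarrow> scott_open (up_cl {k})"
  unfolding scott_open_def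
proof
  show "up_cl {k} \<subseteq> up_cl (up_cl {k} \<inter> compacts)" if "k \<in> compacts"
    using that by (auto simp: up_cl_def)
  show "up_cl (up_cl {k} \<inter> compacts) \<subseteq> up_cl {k}"
    by (auto simp: up_cl_def dest: order_trans)
qed

lemma openin_scott_up_cl_compact: "k \<in> compacts \<Longrightarrow> openin scott_topology (up_cl {k})"
  unfolding scott_topology_def by (simp add: topology_generated_by_Basis scott_open_up_cl_compact)

lemma topspace_scott_topology:
  assumes "algebraic TYPE('a::order)"
  shows "topspace (scott_topology :: 'a topology) = UNIV"
proof -
  have "x \<in> topspace scott_topology" for x :: 'a
  proof -
    obtain k where "k \<in> compacts" "k \<le> x"
      using algebraic_directed_compacts_below[OF assms, of x] unfolding directed_def by blast
    then show ?thesis using openin_subset[OF openin_scott_up_cl_compact] by fastforce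
  qed
  then show ?thesis by blast
qed

lemma openin_scott_topology_compact_nbhd:
  fixes V :: "'a::order set"
  assumes A: "algebraic TYPE('a)" and "openin scott_topology V" "x \<in> V"
  obtains k where "k \<in> compacts" "k \<le> x" "up_cl {k} \<subseteq> V"
proof -
  have "generate_topology_on {U. scott_open U} V"
    using assms(2) unfolding scott_topology_def by (rule openin_topology_generated_by)
  then have "\<forall>x\<in>V. \<exists>k\<in>compacts. k \<le> x \<and> up_cl {k} \<subseteq> V"
  proof (induction rule: generate_topology_on.induct)
    case Empty
    show ?case by simp
  next
    case (Int a b)
    show ?case
    proof
      fix x assume "x \<in> a \<inter> b"
      then obtain k1 k2 where "k1 \<in> compacts" "k1 \<le> x" "up_cl {k1} \<subseteq> a"
        and "k2 \<in> compacts" "k2 \<le> x" "up_cl {k2} \<subseteq> b"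
        using Int.IH by blast
      moreover obtain k where "k \<in> compacts" "k \<le> x" "k1 \<le> k" "k2 \<le> k"
        using algebraic_directed_compacts_below[OF A, of x] calculation
        unfolding directed_def by blast
      moreover have "up_cl {k} \<subseteq> up_cl {k1} \<inter> up_cl {k2}"
        using calculation by (auto simp: up_cl_def dest: order_trans)
      ultimately show "\<exists>k\<in>compacts. k \<le> x \<and> up_cl {k} \<subseteq> a \<inter> b" by blast
    qed
  next
    case (UN K)
    then show ?case by blast
  next
    case (Basis s)
    then have s: "s = up_cl (s \<inter> compacts)" by (simp add: scott_open_def)
    show ?case
    proof
      fix x assume "x \<in> s"
      then obtain k where k: "k \<in> s \<inter> compacts" "k \<le> x" using s unfolding up_cl_def by blast
      have "up_cl {k} \<subseteq> s" by (subst s) (use k in \<open>auto simp: up_cl_def\<close>)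
      with k show "\<exists>k\<in>compacts. k \<le> x \<and> up_cl {k} \<subseteq> s" by blast
    qed
  qed
  then show thesis using that \<open>x \<in> V\<close> by blast
qed

abbreviation maximal_point_space :: "'a::order topology" where
  "maximal_point_space \<equiv> subtopology scott_topology maximal_elements"

lemma topspace_maximal_point_space:
  "algebraic TYPE('a::order) \<Longrightarrow> topspace (maximal_point_space :: 'a topology) = maximal_elements"
  by (simp add: topspace_scott_topology)

lemma openin_maximal_up_cl_compact:
  "k \<in> compacts \<Longrightarrow> openin maximal_point_space (maximal_elements \<inter> up_cl {k})"
  by (simp add: openin_subtopology_Int2 openin_scott_up_cl_compact)

lemma closedin_maximal_up_cl_compact:
  fixes k :: "'a::order"
  assumes B: "bifinite TYPE('a)" and k: "k \<in> compacts"
  shows "closedin maximal_point_space (maximal_elements \<inter> up_cl {k})"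
proof -
  have top: "topspace (maximal_point_space :: 'a topology) = maximal_elements"
    using topspace_maximal_point_space[OF bifinite_imp_algebraic[OF B]] .
  have "\<exists>T. openin maximal_point_space T \<and> x \<in> T \<and> T \<subseteq> maximal_elements - up_cl {k}"
    if x: "x \<in> maximal_elements - up_cl {k}" for x
  proof -
    obtain l where l: "l \<in> compacts" "l \<le> x" "ubs {k, l} = {}"
      using bifinite_maximal_separating_compact[OF B k] x by auto
    then have "maximal_elements \<inter> up_cl {l} \<subseteq> maximal_elements - up_cl {k}"
      using ubs_pair_empty_imp_disjoint by blast
    then show ?thesis using openin_maximal_up_cl_compact[OF l(1)] x l(2) by auto
  qed
  then have "openin maximal_point_space (maximal_elements - up_cl {k})"
    by (subst openin_subopen) blast
  moreover have "maximal_elements - maximal_elements \<inter> up_cl {k} = maximal_elements - up_cl {k}"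
    by blast
  ultimately show ?thesis unfolding closedin_def top by simp
qed

lemma bifinite_maximal_dim_le_0:
  "bifinite TYPE('a::order) \<Longrightarrow> (maximal_point_space :: 'a topology) dim_le 0"
  unfolding dimension_le_0_neighbourhood_base_of_clopen
proof (subst open_neighbourhood_base_of, blast, intro allI impI)
  fix W and x :: 'a
  assume B: "bifinite TYPE('a)" and "openin maximal_point_space W \<and> x \<in> W"
  then obtain T where T: "openin scott_topology T" "W = T \<inter> maximal_elements" "x \<in> T"
    by (auto simp: openin_subtopology)
  then obtain k where k: "k \<in> compacts" "k \<le> x" "up_cl {k} \<subseteq> T"
    using openin_scott_topology_compact_nbhd bifinite_imp_algebraic[OF B] by blast
  show "\<exists>U. (closedin maximal_point_space U \<and> openin maximal_point_space U) \<and> x \<in> U \<and> U \<subseteq> W"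
    using closedin_maximal_up_cl_compact[OF B k(1)] openin_maximal_up_cl_compact[OF k(1)] k T
      \<open>openin maximal_point_space W \<and> x \<in> W\<close> by (intro exI[of _ "maximal_elements \<inter> up_cl {k}"]) auto
qed

lemma bifinite_maximal_Hausdorff:
  assumes B: "bifinite TYPE('a::order)"
  shows "Hausdorff_space (maximal_point_space :: 'a topology)"
  unfolding Hausdorff_space_def topspace_maximal_point_space[OF bifinite_imp_algebraic[OF B]]
proof (intro allI impI)
  fix x y :: 'a assume xy: "x \<in> maximal_elements \<and> y \<in> maximal_elements \<and> x \<noteq> y"
  then have "\<not> x \<le> y" by (metis maximal_elementsD)
  then obtain k where k: "k \<in> compacts" "k \<le> x" "\<not> k \<le> y"
    using algebraic_not_le_imp_compact bifinite_imp_algebraic[OF B] by blast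
  then obtain l where l: "l \<in> compacts" "l \<le> y" "ubs {k, l} = {}"
    using bifinite_maximal_separating_compact[OF B] xy by blast
  show "\<exists>U V. openin maximal_point_space U \<and> openin maximal_point_space V \<and> x \<in> U \<and> y \<in> V \<and> disjnt U V"
    using openin_maximal_up_cl_compact[OF k(1)] openin_maximal_up_cl_compact[OF l(1)]
      ubs_pair_empty_imp_disjoint[OF l(3)] xy k(2) l(2)
    by (intro exI[of _ "maximal_elements \<inter> up_cl {k}"] exI[of _ "maximal_elements \<inter> up_cl {l}"])
      (auto simp: disjnt_def)
qed

theorem proposition3p2:
  fixes Act :: "'act set" and \<iota> :: "'a::order \<Rightarrow> 'act \<Rightarrow> 'a set \<times> 'a set"
  assumes "finite Act"
    and "initial_solution Act \<iota>"
  shows "subtopology scott_topology (maximal_elements :: 'a set) dim_le 0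
       \<and> Hausdorff_space (subtopology scott_topology (maximal_elements :: 'a set))"
proof -
  have "bifinite TYPE('a)" using assms(2) by (simp add: initial_solution_def)
  then show ?thesis using bifinite_maximal_dim_le_0 bifinite_maximal_Hausdorff by blast
qed

end
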